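(* Let $\mathcal{T}$ be a finite tree, $w:V(\mathcal{T})\to\mathbb{R}_{\ge 0}$ a weight function, and $m=w(\mathcal{T})$. Then $$\mathtt{cent}(\mathcal{T},w)\le 2\cdot\mathtt{OPT}(\mathcal{T},w)-m.$$
   Context: For a subgraph $\mathcal{H}$ of $\mathcal{T}$, $w(\mathcal{H})=\sum_{x\in V(\mathcal{H})}w(x)$; for a subgraph $\mathcal{H}$, $w$ also denotes its restriction to $V(\mathcal{H})$. A search tree (STT) on a tree $\mathcal{T}$ is a rooted tree $T$ with vertex set $V(\mathcal{T})$ defined recursively: its root is an arbitrary vertex $r\in V(\mathcal{T})$, and the children of $r$ are the roots of search trees built on the connected components of $\mathcal{T}-r$ (one per component); a single-vertex tree has only itself as search tree. The cost of $T$ is $\mathtt{cost}_w(T)=\sum_{x}w(x)\cdot\mathtt{depth}_T(x)$, where the root has depth $1$. $\mathtt{OPT}(\mathcal{T},w)$ is the minimum cost over all search trees on $\mathcal{T}$. A vertex $v$ is a centroid of $(\mathcal{T},w)$ if every connected component $\mathcal{H}$ of $\mathcal{T}-v$ satisfies $w(\mathcal{H})\le w(\mathcal{T})/2$. A search tree $T$ is a centroid tree of $(\mathcal{T},w)$ if for every vertex $x$, $x$ is a centroid of $(\mathcal{T}[V(T_x)],w)$, where $T_x$ is the subtree of $T$ rooted at $x$. $\mathtt{cent}(\mathcal{T},w)$ is the maximum cost of a centroid tree of $(\mathcal{T},w)$. *)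

theory Defs
  imports Complex_Main
begin

definition ugraph :: "'a set \<Rightarrow> ('a \<Rightarrow> 'a \<Rightarrow> bool) \<Rightarrow> bool" where
  "ugraph V E \<longleftrightarrow> (\<forall>u v. E u v \<longrightarrow> u \<in> V \<and> v \<in> V \<and> u \<noteq> v \<and> E v u)"

definition comp :: "('a \<Rightarrow> 'a \<Rightarrow> bool) \<Rightarrow> 'a set \<Rightarrow> 'a \<Rightarrow> 'a set" where
  "comp E S x = {y. x \<in> S \<and> (\<lambda>a b. a \<in> S \<and> b \<in> S \<and> E a b)\<^sup>*\<^sup>* x y}"

definition components :: "('a \<Rightarrow> 'a \<Rightarrow> bool) \<Rightarrow> 'a set \<Rightarrow> 'a set set" where
  "components E S = comp E S ` S"

definition connected_on :: "('a \<Rightarrow> 'a \<Rightarrow> bool) \<Rightarrow> 'a set \<Rightarrow> bool" where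
  "connected_on E S \<longleftrightarrow> (\<forall>x\<in>S. \<forall>y\<in>S. y \<in> comp E S x)"

definition is_cycle :: "('a \<Rightarrow> 'a \<Rightarrow> bool) \<Rightarrow> 'a list \<Rightarrow> bool" where
  "is_cycle E cs \<longleftrightarrow> length cs \<ge> 3 \<and> distinct cs
     \<and> (\<forall>i. Suc i < length cs \<longrightarrow> E (cs ! i) (cs ! Suc i))
     \<and> E (last cs) (hd cs)"

definition is_tree :: "'a set \<Rightarrow> ('a \<Rightarrow> 'a \<Rightarrow> bool) \<Rightarrow> bool" where
  "is_tree V E \<longleftrightarrow> finite V \<and> V \<noteq> {} \<and> ugraph V E \<and> connected_on E V
     \<and> \<not> (\<exists>cs. is_cycle E cs)"

datatype 'a stree = Node 'a "'a stree list"

inductive is_stt :: "('a \<Rightarrow> 'a \<Rightarrow> bool) \<Rightarrow> 'a set \<Rightarrow> 'a stree \<Rightarrow> bool" for E where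
  "\<lbrakk> r \<in> S; distinct Cs; set Cs = components E (S - {r});
     list_all2 (is_stt E) Cs ts \<rbrakk> \<Longrightarrow> is_stt E S (Node r ts)"

fun depths :: "'a stree \<Rightarrow> nat \<Rightarrow> ('a \<times> nat) list" where
  "depths (Node r ts) d = (r, d) # concat (map (\<lambda>t. depths t (Suc d)) ts)"

definition cost :: "('a \<Rightarrow> real) \<Rightarrow> 'a stree \<Rightarrow> real" where
  "cost w T = (\<Sum>(x, d)\<leftarrow>depths T 1. w x * real d)"

fun verts :: "'a stree \<Rightarrow> 'a set" where
  "verts (Node r ts) = insert r (\<Union>t\<in>set ts. verts t)"

fun subtrees :: "'a stree \<Rightarrow> 'a stree list" where
  "subtrees (Node r ts) = Node r ts # concat (map subtrees ts)"

fun root :: "'a stree \<Rightarrow> 'a" where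
  "root (Node r ts) = r"

definition is_centroid :: "('a \<Rightarrow> 'a \<Rightarrow> bool) \<Rightarrow> ('a \<Rightarrow> real) \<Rightarrow> 'a set \<Rightarrow> 'a \<Rightarrow> bool" where
  "is_centroid E w S v \<longleftrightarrow> v \<in> S \<and>
     (\<forall>H \<in> components E (S - {v}). sum w H \<le> sum w S / 2)"

definition is_centroid_tree :: "('a \<Rightarrow> 'a \<Rightarrow> bool) \<Rightarrow> ('a \<Rightarrow> real) \<Rightarrow> 'a set \<Rightarrow> 'a stree \<Rightarrow> bool" where
  "is_centroid_tree E w V T \<longleftrightarrow> is_stt E V T \<and>
     (\<forall>S \<in> set (subtrees T). is_centroid E w (verts S) (root S))"

definition OPT :: "'a set \<Rightarrow> ('a \<Rightarrow> 'a \<Rightarrow> bool) \<Rightarrow> ('a \<Rightarrow> real) \<Rightarrow> real" where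
  "OPT V E w = Min {cost w T | T. is_stt E V T}"

definition cent :: "'a set \<Rightarrow> ('a \<Rightarrow> 'a \<Rightarrow> bool) \<Rightarrow> ('a \<Rightarrow> real) \<Rightarrow> real" where
  "cent V E w = Max {cost w T | T. is_centroid_tree E w V T}"

end

theory Submission
  imports Defs "HOL-Library.Transitive_Closure_Table"
begin

(*
  By induction on a centroid tree C, compared with an arbitrary search tree T on the same
  vertices.  Let c be the root of C, H_1, ..., H_k the components of the tree minus c (the vertex
  sets of the children C_i of C) and m the total weight.  Restricting T to a connected set keeps it
  a search tree and does not increase depths; it decreases all of them when the set misses the
  root of T.  This gives search trees T_i on the H_i with
    cost(C) = m + sum cost(C_i) <= w(c) + 2 sum cost(T_i)     (induction),
    cost(T) >= sum cost(T_i) + (m + w(c)) / 2,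
  hence cost(C) <= 2 cost(T) - m.  For the second inequality: if T is rooted at c, every H_i
  gains a level below c; otherwise c has depth at least 2 in T and only the component containing
  the root of T, of weight at most m/2 as c is a centroid, does not gain a level.
  Centroid trees exist because a tree has a centroid: moving from a vertex to its neighbour in a
  component of weight more than m/2 strictly shrinks that heavy component.
*)

section \<open>Connected components\<close>

definition adj_within :: "('a \<Rightarrow> 'a \<Rightarrow> bool) \<Rightarrow> 'a set \<Rightarrow> 'a \<Rightarrow> 'a \<Rightarrow> bool" where
  "adj_within E S = (\<lambda>a b. a \<in> S \<and> b \<in> S \<and> E a b)"

lemma mem_comp_iff: "y \<in> comp E S x \<longleftrightarrow> x \<in> S \<and> (adj_within E S)\<^sup>*\<^sup>* x y"
  by (simp add: comp_def adj_within_def)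

lemma adj_within_rtranclp_mem: "(adj_within E S)\<^sup>*\<^sup>* x y \<Longrightarrow> x \<in> S \<Longrightarrow> y \<in> S"
  by (induction rule: rtranclp_induct) (auto simp: adj_within_def)

lemma comp_subset: "comp E S x \<subseteq> S"
  using adj_within_rtranclp_mem by (auto simp: mem_comp_iff)

lemma self_in_comp: "x \<in> S \<Longrightarrow> x \<in> comp E S x"
  by (simp add: mem_comp_iff)

lemma comp_closed:
  assumes "a \<in> comp E S x" "b \<in> S" "E a b"
  shows "b \<in> comp E S x"
proof -
  have "adj_within E S a b" using assms subsetD[OF comp_subset] by (auto simp: adj_within_def)
  with assms(1) show ?thesis by (auto simp: mem_comp_iff intro: rtranclp.rtrancl_into_rtrancl)
qed

lemma comp_mono: "S' \<subseteq> S \<Longrightarrow> comp E S' x \<subseteq> comp E S x"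
proof -
  assume "S' \<subseteq> S"
  then have "adj_within E S' \<le> adj_within E S" by (auto simp: adj_within_def)
  then have "(adj_within E S')\<^sup>*\<^sup>* x y \<Longrightarrow> (adj_within E S)\<^sup>*\<^sup>* x y" for y
    by (metis rtranclp_mono predicate2D)
  with \<open>S' \<subseteq> S\<close> show ?thesis by (auto simp: mem_comp_iff)
qed

lemma connected_subset_comp:
  assumes "connected_on E H" "H \<subseteq> S" "x \<in> H"
  shows "H \<subseteq> comp E S x"
proof
  fix y assume "y \<in> H"
  with assms(1,3) have "y \<in> comp E H x" unfolding connected_on_def by blast
  with comp_mono[OF assms(2)] show "y \<in> comp E S x" by blast
qed

lemma components_subset: "C \<in> components E S \<Longrightarrow> C \<subseteq> S"
  unfolding components_def using subsetD[OF comp_subset] by auto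

lemma components_nonempty: "C \<in> components E S \<Longrightarrow> C \<noteq> {}"
  unfolding components_def using self_in_comp by (metis emptyE imageE)

lemma finite_components: "finite S \<Longrightarrow> finite (components E S)"
  unfolding components_def by simp

lemma Union_components: "\<Union> (components E S) = S"
proof
  show "\<Union> (components E S) \<subseteq> S" using components_subset by blast
  show "S \<subseteq> \<Union> (components E S)"
    unfolding components_def using self_in_comp by (intro subsetI UN_I)
qed

lemma rtranclp_exits_set:
  "R\<^sup>*\<^sup>* a b \<Longrightarrow> a \<in> H \<Longrightarrow> b \<notin> H \<Longrightarrow> \<exists>x y. x \<in> H \<and> y \<notin> H \<and> R x y"
  by (induction rule: rtranclp_induct) auto

locale sym_graph =
  fixes E :: "'a \<Rightarrow> 'a \<Rightarrow> bool"
  assumes sym: "symp E"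
begin

lemma adj_within_rtranclp_sym: "(adj_within E S)\<^sup>*\<^sup>* x y \<Longrightarrow> (adj_within E S)\<^sup>*\<^sup>* y x"
proof (induction rule: rtranclp_induct)
  case (step y z)
  then have "adj_within E S z y" using sym by (auto simp: adj_within_def dest: sympD)
  with step.IH show ?case by (meson converse_rtranclp_into_rtranclp)
qed simp

lemma comp_eq_comp:
  assumes "y \<in> comp E S x"
  shows "comp E S y = comp E S x"
proof -
  have x: "x \<in> S" and xy: "(adj_within E S)\<^sup>*\<^sup>* x y" using assms by (auto simp: mem_comp_iff)
  have y: "y \<in> S" and yx: "(adj_within E S)\<^sup>*\<^sup>* y x"
    using adj_within_rtranclp_mem[OF xy x] adj_within_rtranclp_sym[OF xy] by auto
  show ?thesis
  proof (intro set_eqI iffI)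
    fix z assume "z \<in> comp E S y"
    then show "z \<in> comp E S x" using x rtranclp_trans[OF xy] by (simp add: mem_comp_iff)
  next
    fix z assume "z \<in> comp E S x"
    then show "z \<in> comp E S y" using y rtranclp_trans[OF yx] by (simp add: mem_comp_iff)
  qed
qed

lemma components_eq_comp:
  assumes "C \<in> components E S" "x \<in> C"
  shows "C = comp E S x"
proof -
  obtain y where "C = comp E S y" using assms(1) unfolding components_def by blast
  with assms(2) comp_eq_comp show ?thesis by simp
qed

lemma components_disjoint:
  assumes "C \<in> components E S" "C' \<in> components E S" "C \<noteq> C'"
  shows "C \<inter> C' = {}"
proof (rule ccontr)
  assume "C \<inter> C' \<noteq> {}"
  then obtain x where "x \<in> C" "x \<in> C'" by blast
  then show False using assms components_eq_comp by metis
qed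

lemma connected_on_comp: "connected_on E (comp E S x)"
  unfolding connected_on_def
proof (intro ballI)
  fix y z assume y: "y \<in> comp E S x" and z: "z \<in> comp E S x"
  define C where "C = comp E S x"
  have "z \<in> comp E S y" using z comp_eq_comp[OF y] by simp
  then have "(adj_within E S)\<^sup>*\<^sup>* y z" by (simp add: mem_comp_iff)
  then have "(adj_within E C)\<^sup>*\<^sup>* y z \<and> z \<in> C"
  proof (induction rule: rtranclp_induct)
    case base then show ?case using y by (simp add: C_def)
  next
    case (step b c)
    then have "c \<in> C" using comp_closed unfolding C_def adj_within_def by metis
    with step show ?case by (auto simp: adj_within_def intro: rtranclp.rtrancl_into_rtrancl)
  qed
  then show "z \<in> comp E (comp E S x) y" using y by (simp add: mem_comp_iff C_def)
qed

lemma connected_on_components: "C \<in> components E S \<Longrightarrow> connected_on E C"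
  unfolding components_def using connected_on_comp by auto

lemma component_exit_edge:
  assumes "H \<in> components E (S - {v})" "a \<in> H" "b \<in> S" "b \<notin> H" "E a b"
  shows "b = v"
proof (rule ccontr)
  assume "b \<noteq> v"
  with assms(3) have "b \<in> S - {v}" by blast
  with assms(5) have "b \<in> comp E (S - {v}) a"
    using comp_closed components_eq_comp[OF assms(1,2)] assms(2) by metis
  with assms(1,2,4) show False using components_eq_comp by blast
qed

lemma neighbour_in_component:
  assumes con: "connected_on E S" and v: "v \<in> S" and H: "H \<in> components E (S - {v})"
  obtains u where "u \<in> H" "E v u"
proof -
  have HS: "H \<subseteq> S - {v}" using components_subset[OF H] .
  obtain h where h: "h \<in> H" using components_nonempty[OF H] by blast
  have "v \<in> comp E S h" using con v h HS unfolding connected_on_def by blast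
  then have "(adj_within E S)\<^sup>*\<^sup>* h v" by (simp add: mem_comp_iff)
  moreover have "v \<notin> H" using HS by blast
  ultimately obtain a b where ab: "a \<in> H" "b \<notin> H" "adj_within E S a b"
    using rtranclp_exits_set[of _ h v H] h by blast
  then have "b = v" using component_exit_edge[OF H ab(1)] by (simp add: adj_within_def)
  with ab(3) have "E v a" using sym by (simp add: adj_within_def sympD)
  with ab(1) show thesis by (rule that)
qed

end

section \<open>Search trees, depths and costs\<close>

lemma finite_verts: "finite (verts T)"
  by (induction T) auto

lemma stt_verts: "is_stt E S T \<Longrightarrow> verts T = S"
proof (induction rule: is_stt.induct)
  case (1 r S Cs ts)
  then have "Cs = map verts ts"
    by (auto simp: list_all2_conv_all_nth intro!: nth_equalityI)
  then have "(\<Union>t\<in>set ts. verts t) = \<Union> (components E (S - {r}))"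
    using 1(3) by auto
  with 1(1) show ?case by (auto simp: Union_components)
qed

lemma is_stt_Node_iff:
  "is_stt E S (Node r ts) \<longleftrightarrow> r \<in> S \<and> distinct (map verts ts)
     \<and> set (map verts ts) = components E (S - {r}) \<and> (\<forall>t\<in>set ts. is_stt E (verts t) t)"
proof
  assume "is_stt E S (Node r ts)"
  then obtain Cs where Cs: "r \<in> S" "distinct Cs" "set Cs = components E (S - {r})"
    "list_all2 (is_stt E) Cs ts" by (cases rule: is_stt.cases) auto
  have children: "is_stt E (Cs ! i) (ts ! i)" "length Cs = length ts" if "i < length ts" for i
    using Cs(4) that by (auto simp: list_all2_conv_all_nth)
  then have "Cs = map verts ts"
    using stt_verts by (metis length_map list_all2_lengthD[OF Cs(4)] nth_equalityI nth_map)
  with Cs children show "r \<in> S \<and> distinct (map verts ts)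
     \<and> set (map verts ts) = components E (S - {r}) \<and> (\<forall>t\<in>set ts. is_stt E (verts t) t)"
    by (metis in_set_conv_nth nth_map)
next
  assume "r \<in> S \<and> distinct (map verts ts) \<and> set (map verts ts) = components E (S - {r})
     \<and> (\<forall>t\<in>set ts. is_stt E (verts t) t)"
  then show "is_stt E S (Node r ts)"
    by (intro is_stt.intros[of r S "map verts ts"]) (auto simp: list_all2_conv_all_nth)
qed

lemma stt_root_mem: "is_stt E S T \<Longrightarrow> root T \<in> S"
  by (cases T) (simp add: is_stt_Node_iff)

lemma stt_child_component:
  "is_stt E S (Node r ts) \<Longrightarrow> t \<in> set ts \<Longrightarrow> verts t \<in> components E (S - {r})"
  unfolding is_stt_Node_iff by auto

lemma stt_child: "is_stt E S (Node r ts) \<Longrightarrow> t \<in> set ts \<Longrightarrow> is_stt E (verts t) t"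
  unfolding is_stt_Node_iff by auto

lemma stt_child_verts_subset:
  "is_stt E S (Node r ts) \<Longrightarrow> t \<in> set ts \<Longrightarrow> verts t \<subseteq> S - {r}"
  using stt_child_component components_subset by metis

lemma stt_children_distinct: "is_stt E S (Node r ts) \<Longrightarrow> distinct ts"
  unfolding is_stt_Node_iff by (simp add: distinct_map)

lemma ex_stt_Node_of_components:
  assumes "finite S" "r \<in> S" "\<And>K. K \<in> components E (S - {r}) \<Longrightarrow> is_stt E K (f K)"
  shows "\<exists>ts. is_stt E S (Node r ts) \<and> set ts = f ` components E (S - {r})"
proof -
  obtain Ks where Ks: "distinct Ks" "set Ks = components E (S - {r})"
    using finite_distinct_list finite_components[of "S - {r}" E] assms(1) by blast
  have "map verts (map f Ks) = Ks"
    unfolding map_map by (rule map_idI) (metis Ks(2) assms(3) stt_verts comp_apply)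
  moreover have "is_stt E (verts (f K)) (f K)" if "K \<in> components E (S - {r})" for K
    using assms(3)[OF that] stt_verts by metis
  ultimately have "is_stt E S (Node r (map f Ks))"
    using Ks assms(2) unfolding is_stt_Node_iff by auto
  with Ks(2) show ?thesis by auto
qed

lemma finite_stt: "finite S \<Longrightarrow> finite {T. is_stt E S T}"
proof (induction "card S" arbitrary: S rule: less_induct)
  case less
  define A where "A = (\<Union>r\<in>S. \<Union>K\<in>components E (S - {r}). {t. is_stt E K t})"
  have "finite {t. is_stt E K t}" if "r \<in> S" "K \<in> components E (S - {r})" for r K
  proof (rule less.hyps)
    have "K \<subset> S" using components_subset[OF that(2)] that(1) by blast
    then show "card K < card S" "finite K"
      using psubset_card_mono[OF less.prems] finite_subset less.prems by auto
  qed
  then have A: "finite A"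
    unfolding A_def using less.prems by (intro finite_UN_I) (simp_all add: finite_components)
  have "{T. is_stt E S T} \<subseteq> (\<lambda>(r, ts). Node r ts) ` (S \<times> {ts. set ts \<subseteq> A \<and> length ts \<le> card A})"
  proof
    fix T assume "T \<in> {T. is_stt E S T}"
    moreover obtain r ts where T: "T = Node r ts" by (cases T)
    ultimately have st: "is_stt E S (Node r ts)" by simp
    have r: "r \<in> S" using stt_root_mem[OF st] by simp
    have ts: "set ts \<subseteq> A"
    proof
      fix t assume "t \<in> set ts"
      with r show "t \<in> A"
        unfolding A_def using stt_child_component[OF st] stt_child[OF st] by blast
    qed
    have "length ts = card (set ts)"
      using distinct_card[OF stt_children_distinct[OF st]] by simp
    also have "\<dots> \<le> card A" using card_mono[OF A ts] .
    finally show "T \<in> (\<lambda>(r, ts). Node r ts) ` (S \<times> {ts. set ts \<subseteq> A \<and> length ts \<le> card A})"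
      using T r ts by auto
  qed
  moreover have "finite (S \<times> {ts. set ts \<subseteq> A \<and> length ts \<le> card A})"
    using less.prems finite_lists_length_le[OF A] by simp
  ultimately show ?case by (rule finite_subset[OF _ finite_imageI])
qed

text \<open>In a search tree the children have disjoint vertex sets, so the sum below has at most
  one nonzero summand: the depth of \<open>x\<close> is found in the unique child containing it.\<close>

fun depth :: "'a stree \<Rightarrow> 'a \<Rightarrow> nat" where
  "depth (Node r ts) x =
     (if x = r then 1 else Suc (\<Sum>t\<leftarrow>ts. if x \<in> verts t then depth t x else 0))"

declare depth.simps [simp del]

lemma depth_root: "depth T (root T) = 1"
  by (cases T) (simp add: depth.simps)

lemma depth_ge_1: "depth T x \<ge> 1"
  by (cases T) (simp add: depth.simps)

context sym_graph
begin

lemma stt_children_disjoint: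
  assumes "is_stt E S (Node r ts)" "t \<in> set ts" "t' \<in> set ts" "t \<noteq> t'"
  shows "verts t \<inter> verts t' = {}"
proof (rule components_disjoint)
  show "verts t \<in> components E (S - {r})" using assms(1,2) by (rule stt_child_component)
  show "verts t' \<in> components E (S - {r})" using assms(1,3) by (rule stt_child_component)
  show "verts t \<noteq> verts t'"
    using assms unfolding is_stt_Node_iff by (auto simp: distinct_map inj_on_def)
qed

lemma sum_stt_Node:
  assumes "is_stt E S (Node r ts)"
  shows "sum f S = f r + (\<Sum>t\<in>set ts. sum f (verts t))"
proof -
  have S: "S = insert r (\<Union>t\<in>set ts. verts t)" and r: "r \<notin> (\<Union>t\<in>set ts. verts t)"
    using stt_verts[OF assms] stt_child_verts_subset[OF assms] by auto
  have "sum f (\<Union>t\<in>set ts. verts t) = (\<Sum>t\<in>set ts. sum f (verts t))"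
    by (rule sum.UNION_disjoint) (auto simp: finite_verts dest: stt_children_disjoint[OF assms])
  with S r show ?thesis by (simp add: finite_verts)
qed

lemma depth_child:
  assumes st: "is_stt E S (Node r ts)" and t: "t \<in> set ts" and x: "x \<in> verts t"
  shows "depth (Node r ts) x = Suc (depth t x)"
proof -
  have "x \<noteq> r" using stt_child_verts_subset[OF st t] x by auto
  moreover have "(\<Sum>t'\<leftarrow>ts. if x \<in> verts t' then depth t' x else 0) = depth t x"
  proof -
    have "(\<Sum>t'\<leftarrow>ts. if x \<in> verts t' then depth t' x else 0)
        = (\<Sum>t'\<in>set ts. if x \<in> verts t' then depth t' x else 0)"
      using stt_children_distinct[OF st] by (simp add: sum_list_distinct_conv_sum_set)
    also have "\<dots> = (\<Sum>t'\<in>{t}. if x \<in> verts t' then depth t' x else 0)"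
      using t x stt_children_disjoint[OF st t] by (intro sum.mono_neutral_right) auto
    finally show ?thesis using x by simp
  qed
  ultimately show ?thesis by (simp add: depth.simps)
qed

lemma depth_ge_2:
  assumes "is_stt E S T" "x \<in> S" "x \<noteq> root T"
  shows "depth T x \<ge> 2"
proof (cases T)
  case (Node r ts)
  with assms obtain t where "t \<in> set ts" "x \<in> verts t"
    using stt_verts by fastforce
  with assms Node show ?thesis using depth_child depth_ge_1[of t x] by fastforce
qed

lemma sum_depths_eq:
  "is_stt E (verts T) T \<Longrightarrow>
    (\<Sum>(x, k)\<leftarrow>depths T d. w x * real k) = (\<Sum>x\<in>verts T. w x * (real (depth T x) + real d - 1))"
proof (induction T arbitrary: d)
  case (Node r ts)
  note st = Node.prems
  have sum_list_concat: "sum_list (concat xss) = (\<Sum>xs\<leftarrow>xss. sum_list xs)" for xss :: "real list list"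
    by (induction xss) simp_all
  have "(\<Sum>(x, k)\<leftarrow>depths (Node r ts) d. w x * real k)
      = w r * real d + (\<Sum>t\<leftarrow>ts. \<Sum>(x, k)\<leftarrow>depths t (Suc d). w x * real k)"
    by (simp add: map_concat sum_list_concat o_def)
  also have "(\<Sum>t\<leftarrow>ts. \<Sum>(x, k)\<leftarrow>depths t (Suc d). w x * real k)
      = (\<Sum>t\<in>set ts. \<Sum>(x, k)\<leftarrow>depths t (Suc d). w x * real k)"
    using stt_children_distinct[OF st] by (simp add: sum_list_distinct_conv_sum_set)
  also have "\<dots> = (\<Sum>t\<in>set ts. \<Sum>x\<in>verts t. w x * (real (depth (Node r ts) x) + real d - 1))"
  proof (rule sum.cong [OF refl])
    fix t assume t: "t \<in> set ts"
    have "(\<Sum>(x, k)\<leftarrow>depths t (Suc d). w x * real k)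
        = (\<Sum>x\<in>verts t. w x * (real (depth t x) + real (Suc d) - 1))"
      using Node.IH[OF t stt_child[OF st t]] .
    also have "\<dots> = (\<Sum>x\<in>verts t. w x * (real (depth (Node r ts) x) + real d - 1))"
      using depth_child[OF st t] by (intro sum.cong refl) simp
    finally show "(\<Sum>(x, k)\<leftarrow>depths t (Suc d). w x * real k) = \<dots>" .
  qed
  also have "w r * real d + \<dots> = (\<Sum>x\<in>verts (Node r ts). w x * (real (depth (Node r ts) x) + real d - 1))"
    using sum_stt_Node[OF st, of "\<lambda>x. w x * (real (depth (Node r ts) x) + real d - 1)"]
    by (simp add: depth.simps)
  finally show ?case .
qed

lemma cost_eq_sum_depth: "is_stt E S T \<Longrightarrow> cost w T = (\<Sum>x\<in>S. w x * real (depth T x))"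
  using sum_depths_eq[of T w 1] stt_verts by (fastforce simp: cost_def)

lemma cost_Node:
  assumes st: "is_stt E S (Node r ts)"
  shows "cost w (Node r ts) = sum w S + (\<Sum>t\<in>set ts. cost w t)"
proof -
  have "cost w (Node r ts) = (\<Sum>x\<in>S. w x * real (depth (Node r ts) x))"
    using st by (rule cost_eq_sum_depth)
  also have "\<dots> = w r + (\<Sum>t\<in>set ts. \<Sum>x\<in>verts t. w x * real (depth (Node r ts) x))"
    using sum_stt_Node[OF st, of "\<lambda>x. w x * real (depth (Node r ts) x)"] depth_root[of "Node r ts"]
    by simp
  also have "\<dots> = w r + (\<Sum>t\<in>set ts. sum w (verts t) + cost w t)"
  proof (intro arg_cong2[where f = "(+)"] refl sum.cong)
    fix t assume t: "t \<in> set ts"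
    have "(\<Sum>x\<in>verts t. w x * real (depth (Node r ts) x)) = (\<Sum>x\<in>verts t. w x + w x * real (depth t x))"
      using depth_child[OF st t] by (intro sum.cong refl) (simp add: algebra_simps)
    then show "(\<Sum>x\<in>verts t. w x * real (depth (Node r ts) x)) = sum w (verts t) + cost w t"
      using cost_eq_sum_depth[OF stt_child[OF st t]] by (simp add: sum.distrib)
  qed
  also have "\<dots> = sum w S + (\<Sum>t\<in>set ts. cost w t)"
    using sum_stt_Node[OF st, of w] by (simp add: sum.distrib)
  finally show ?thesis .
qed

section \<open>Restriction of search trees and the cost of centroid trees\<close>

lemma stt_child_containing:
  assumes st: "is_stt E S (Node r ts)"
    and K: "K \<subseteq> S - {r}" "K \<noteq> {}" "connected_on E K"
  obtains t where "t \<in> set ts" "K \<subseteq> verts t"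
proof -
  obtain x where x: "x \<in> K" using K(2) by blast
  then have "comp E (S - {r}) x \<in> set (map verts ts)"
    using K(1) st unfolding is_stt_Node_iff components_def by blast
  then obtain t where "t \<in> set ts" "verts t = comp E (S - {r}) x" by auto
  moreover have "K \<subseteq> comp E (S - {r}) x" using connected_subset_comp[OF K(3,1) x] .
  ultimately show thesis using that by simp
qed

text \<open>The restriction descends into the child containing \<open>H\<close> as long as \<open>H\<close> misses the
  root; once the root lies in \<open>H\<close>, it stays on top and the components of \<open>H\<close> minus it are
  restricted recursively.\<close>

lemma stt_restrict:
  "is_stt E S T \<Longrightarrow> H \<subseteq> S \<Longrightarrow> H \<noteq> {} \<Longrightarrow> connected_on E H \<Longrightarrow>
    \<exists>T'. is_stt E H T' \<and> (\<forall>x\<in>H. depth T' x + (if root T \<in> H then 0 else 1) \<le> depth T x)"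
proof (induction T arbitrary: S H)
  case (Node r ts)
  note st = Node.prems(1)
  show ?case
  proof (cases "r \<in> H")
    case False
    then obtain t where t: "t \<in> set ts" "H \<subseteq> verts t"
      using stt_child_containing[OF st] Node.prems by blast
    with Node.IH[OF t(1) stt_child[OF st t(1)] t(2)] Node.prems(3,4) obtain T'
      where "is_stt E H T'" "\<forall>x\<in>H. depth T' x \<le> depth t x" by fastforce
    with False t show ?thesis using depth_child[OF st t(1)] by fastforce
  next
    case True
    have "\<exists>T'. is_stt E K T' \<and> (\<forall>y\<in>K. Suc (depth T' y) \<le> depth (Node r ts) y)"
      if K: "K \<in> components E (H - {r})" for K
    proof -
      have "K \<subseteq> S - {r}" using components_subset[OF K] Node.prems(2) by blast
      then obtain t where t: "t \<in> set ts" "K \<subseteq> verts t"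
        using stt_child_containing[OF st] components_nonempty[OF K] connected_on_components[OF K]
        by blast
      with Node.IH[OF t(1) stt_child[OF st t(1)] t(2)] components_nonempty[OF K]
        connected_on_components[OF K] obtain T'
        where "is_stt E K T'" "\<forall>y\<in>K. depth T' y \<le> depth t y" by fastforce
      with t show ?thesis using depth_child[OF st t(1)] by fastforce
    qed
    then obtain f where f: "\<And>K. K \<in> components E (H - {r}) \<Longrightarrow>
        is_stt E K (f K) \<and> (\<forall>y\<in>K. Suc (depth (f K) y) \<le> depth (Node r ts) y)"
      by metis
    have "finite H" using Node.prems(2) stt_verts[OF st] finite_verts by (metis finite_subset)
    with True f obtain ts' where st': "is_stt E H (Node r ts')"
      and ts': "set ts' = f ` components E (H - {r})"
      using ex_stt_Node_of_components[of H r E f] by blast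
    have "depth (Node r ts') x \<le> depth (Node r ts) x" if x: "x \<in> H" for x
    proof (cases "x = r")
      case False
      then obtain K where K: "K \<in> components E (H - {r})" "x \<in> K"
        using x Union_components[of E "H - {r}"] by blast
      then have "x \<in> verts (f K)" using f stt_verts by metis
      then have "depth (Node r ts') x = Suc (depth (f K) x)"
        using depth_child[OF st'] ts' K(1) by blast
      with f[OF K(1)] K(2) show ?thesis by simp
    qed (simp add: depth.simps)
    with st' True show ?thesis by auto
  qed
qed

lemma stt_restrict_cost:
  assumes "is_stt E S T" "H \<subseteq> S" "H \<noteq> {}" "connected_on E H" "\<forall>x\<in>H. 0 \<le> w x"
  obtains T' where "is_stt E H T'"
    "cost w T' + (if root T \<in> H then 0 else sum w H) \<le> (\<Sum>x\<in>H. w x * real (depth T x))"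
proof -
  obtain T' where T': "is_stt E H T'"
    "\<forall>x\<in>H. depth T' x + (if root T \<in> H then 0 else 1) \<le> depth T x"
    using stt_restrict assms(1-4) by blast
  have "cost w T' + (if root T \<in> H then 0 else sum w H)
      = (\<Sum>x\<in>H. w x * (real (depth T' x) + (if root T \<in> H then 0 else 1)))"
    using cost_eq_sum_depth[OF T'(1)] by (simp add: sum.distrib algebra_simps)
  also have "\<dots> \<le> (\<Sum>x\<in>H. w x * real (depth T x))"
  proof (rule sum_mono)
    fix x assume "x \<in> H"
    with T'(2) assms(5) show "w x * (real (depth T' x) + (if root T \<in> H then 0 else 1))
        \<le> w x * real (depth T x)"
      by (intro mult_left_mono) (auto split: if_splits)
  qed
  finally show thesis using that T'(1) by blast
qed

lemma stt_cost_ge_restrictions: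
  assumes T: "is_stt E S T" and C: "is_stt E S (Node c cts)" and w: "\<forall>x\<in>S. 0 \<le> w x"
  obtains g where "\<And>t. t \<in> set cts \<Longrightarrow> is_stt E (verts t) (g t)"
    "w c * real (depth T c)
       + (\<Sum>t\<in>set cts. cost w (g t) + (if root T \<in> verts t then 0 else sum w (verts t)))
     \<le> cost w T"
proof -
  have "\<exists>T'. is_stt E (verts t) T' \<and> cost w T' + (if root T \<in> verts t then 0 else sum w (verts t))
      \<le> (\<Sum>x\<in>verts t. w x * real (depth T x))" if t: "t \<in> set cts" for t
  proof -
    have K: "verts t \<in> components E (S - {c})" using stt_child_component[OF C t] .
    have "verts t \<subseteq> S" using components_subset[OF K] by blast
    with w obtain T' where "is_stt E (verts t) T'"
      "cost w T' + (if root T \<in> verts t then 0 else sum w (verts t))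
        \<le> (\<Sum>x\<in>verts t. w x * real (depth T x))"
      using stt_restrict_cost[OF T _ components_nonempty[OF K] connected_on_components[OF K]]
      by (metis subsetD)
    then show ?thesis by blast
  qed
  then obtain g where g: "\<And>t. t \<in> set cts \<Longrightarrow> is_stt E (verts t) (g t) \<and>
      cost w (g t) + (if root T \<in> verts t then 0 else sum w (verts t))
      \<le> (\<Sum>x\<in>verts t. w x * real (depth T x))"
    by metis
  have "w c * real (depth T c)
       + (\<Sum>t\<in>set cts. cost w (g t) + (if root T \<in> verts t then 0 else sum w (verts t)))
     \<le> w c * real (depth T c) + (\<Sum>t\<in>set cts. \<Sum>x\<in>verts t. w x * real (depth T x))"
    using g by (simp add: sum_mono)
  also have "\<dots> = cost w T"
    using cost_eq_sum_depth[OF T] sum_stt_Node[OF C, of "\<lambda>x. w x * real (depth T x)"] by simp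
  finally show thesis using that g by blast
qed

lemma is_centroid_tree_Node_iff:
  "is_centroid_tree E w S (Node c ts) \<longleftrightarrow>
     is_stt E S (Node c ts) \<and> is_centroid E w S c \<and> (\<forall>t\<in>set ts. is_centroid_tree E w (verts t) t)"
proof (cases "is_stt E S (Node c ts)")
  case True
  have "set (subtrees (Node c ts)) = insert (Node c ts) (\<Union>t\<in>set ts. set (subtrees t))"
    by simp
  moreover have "verts (Node c ts) = S" using stt_verts[OF True] .
  ultimately show ?thesis
    using True stt_child[OF True] unfolding is_centroid_tree_def by (simp add: ball_Un)
qed (simp add: is_centroid_tree_def)

lemma stt_cost_ge_centroid_restrictions:
  assumes T: "is_stt E S T" and C: "is_stt E S (Node c cts)" and cen: "is_centroid E w S c"
    and w: "\<forall>x\<in>S. 0 \<le> w x"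
  obtains g where "\<And>t. t \<in> set cts \<Longrightarrow> is_stt E (verts t) (g t)"
    "sum w S + w c + 2 * (\<Sum>t\<in>set cts. cost w (g t)) \<le> 2 * cost w T"
proof -
  define R where "R t = (if root T \<in> verts t then 0 else sum w (verts t))" for t
  obtain g where g: "\<And>t. t \<in> set cts \<Longrightarrow> is_stt E (verts t) (g t)"
    and lower: "w c * real (depth T c) + (\<Sum>t\<in>set cts. cost w (g t) + R t) \<le> cost w T"
    using stt_cost_ge_restrictions[OF T C w] unfolding R_def by blast
  define m where "m = sum w S"
  define G where "G = (\<Sum>t\<in>set cts. cost w (g t))"
  have m: "m = w c + (\<Sum>t\<in>set cts. sum w (verts t))"
    unfolding m_def by (rule sum_stt_Node[OF C])
  have wc: "0 \<le> w c" "w c \<le> m"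
    using w stt_root_mem[OF C] stt_child_verts_subset[OF C] by (auto simp: m intro!: sum_nonneg)
  have "m + w c + 2 * G \<le> 2 * cost w T"
  proof (cases "root T = c")
    case True
    then have "R t = sum w (verts t)" if "t \<in> set cts" for t
      using stt_child_verts_subset[OF C that] by (auto simp: R_def)
    then have "(\<Sum>t\<in>set cts. R t) = m - w c" by (simp add: m)
    moreover have "depth T c = 1" using True depth_root by blast
    ultimately show ?thesis using lower wc by (simp add: sum.distrib G_def)
  next
    case False
    obtain t0 where t0: "t0 \<in> set cts" "root T \<in> verts t0"
      using stt_root_mem[OF T] stt_verts[OF C] False by auto
    have "sum w (verts t0) \<le> m / 2"
      using cen stt_child_component[OF C t0(1)] by (simp add: is_centroid_def m_def)
    moreover have "R t = sum w (verts t)" if "t \<in> set cts - {t0}" for t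
      using that t0 stt_children_disjoint[OF C] by (auto simp: R_def)
    then have "(\<Sum>t\<in>set cts. R t) = m - w c - sum w (verts t0)"
      using t0 by (simp add: m R_def sum.remove)
    moreover have "2 \<le> depth T c"
      using depth_ge_2[OF T stt_root_mem[OF C]] False by simp
    then have "w c * 2 \<le> w c * real (depth T c)" using wc by (intro mult_left_mono) simp_all
    ultimately show ?thesis using lower wc by (simp add: sum.distrib G_def)
  qed
  then show thesis using that g unfolding m_def G_def by blast
qed

lemma centroid_tree_cost_le:
  "is_centroid_tree E w S C \<Longrightarrow> \<forall>x\<in>S. 0 \<le> w x \<Longrightarrow> is_stt E S T \<Longrightarrow>
    cost w C \<le> 2 * cost w T - sum w S"
proof (induction C arbitrary: S T)
  case (Node c cts)
  note w = Node.prems(2)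
  have C: "is_stt E S (Node c cts)" and cen: "is_centroid E w S c"
    and cen_child: "\<And>t. t \<in> set cts \<Longrightarrow> is_centroid_tree E w (verts t) t"
    using Node.prems(1) by (auto simp: is_centroid_tree_Node_iff)
  obtain g where g: "\<And>t. t \<in> set cts \<Longrightarrow> is_stt E (verts t) (g t)"
    and key: "sum w S + w c + 2 * (\<Sum>t\<in>set cts. cost w (g t)) \<le> 2 * cost w T"
    using stt_cost_ge_centroid_restrictions[OF Node.prems(3) C cen w] by blast
  have w_child: "\<forall>x\<in>verts t. 0 \<le> w x" if "t \<in> set cts" for t
    using w stt_child_verts_subset[OF C that] by blast
  have "cost w (Node c cts) = sum w S + (\<Sum>t\<in>set cts. cost w t)"
    by (rule cost_Node[OF C])
  also have "\<dots> \<le> sum w S + (\<Sum>t\<in>set cts. 2 * cost w (g t) - sum w (verts t))"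
    using Node.IH cen_child w_child g by (intro add_left_mono sum_mono) blast
  also have "\<dots> = w c + 2 * (\<Sum>t\<in>set cts. cost w (g t))"
    by (simp add: sum_stt_Node[OF C, of w] sum_subtractf sum_distrib_left)
  finally show ?case using key by linarith
qed

end

section \<open>Centroids in trees\<close>

lemma rtrancl_path_nth:
  "rtrancl_path r x xs y \<Longrightarrow> Suc i < length (x # xs) \<Longrightarrow> r ((x # xs) ! i) ((x # xs) ! Suc i)"
proof (induction arbitrary: i rule: rtrancl_path.induct)
  case (step x y ys z)
  then show ?case by (cases i) auto
qed simp

lemma rtrancl_path_last: "rtrancl_path r x xs y \<Longrightarrow> last (x # xs) = y"
  by (induction rule: rtrancl_path.induct) auto

lemma rtrancl_path_targets: "rtrancl_path r x xs y \<Longrightarrow> z \<in> set xs \<Longrightarrow> \<exists>a. r a z"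
  by (induction rule: rtrancl_path.induct) auto

locale forest = sym_graph +
  assumes acyclic: "\<not> (\<exists>cs. is_cycle E cs)"
begin

lemma unique_neighbour_in_component:
  assumes H: "H \<in> components E (S - {v})" and "u \<in> H" "p \<in> H" "E v u" "E v p"
  shows "u = p"
proof (rule ccontr)
  assume "u \<noteq> p"
  have "(adj_within E (S - {v}))\<^sup>*\<^sup>* u p"
    using assms(2,3) components_eq_comp[OF H] by (metis mem_comp_iff)
  then obtain xs where path: "rtrancl_path (adj_within E (S - {v})) u xs p" "distinct (u # xs)"
    by (metis rtranclp_eq_rtrancl_path rtrancl_path_distinct)
  with \<open>u \<noteq> p\<close> have "xs \<noteq> []" by (auto elim: rtrancl_path.cases)
  have "v \<notin> set (u # xs)"
    using assms(2) components_subset[OF H] rtrancl_path_targets[OF path(1)]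
    by (auto simp: adj_within_def)
  have "is_cycle E (v # u # xs)"
    unfolding is_cycle_def
  proof (intro conjI allI impI)
    show "3 \<le> length (v # u # xs)" using \<open>xs \<noteq> []\<close> by (cases xs) simp_all
    show "distinct (v # u # xs)" using path(2) \<open>v \<notin> set (u # xs)\<close> by simp
    show "E (last (v # u # xs)) (hd (v # u # xs))"
      using rtrancl_path_last[OF path(1)] assms(5) sym by (simp add: sympD)
    fix i assume i: "Suc i < length (v # u # xs)"
    show "E ((v # u # xs) ! i) ((v # u # xs) ! Suc i)"
    proof (cases i)
      case (Suc j)
      then show ?thesis
        using rtrancl_path_nth[OF path(1), of j] i by (simp add: adj_within_def)
    qed (simp add: assms(4))
  qed
  with acyclic show False by blast
qed

lemma component_through_neighbour:
  assumes H: "H \<in> components E (S - {v})" and u: "u \<in> H" "E v u"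
    and H': "H' \<in> components E (S - {u})" and meet: "H \<inter> H' \<noteq> {}"
  shows "H' \<subset> H"
proof -
  have HS: "H \<subseteq> S - {v}" and H'S: "H' \<subseteq> S - {u}"
    using components_subset[OF H] components_subset[OF H'] .
  obtain h' where h': "h' \<in> H" "h' \<in> H'" using meet by blast
  have "v \<notin> H'"
  proof
    assume "v \<in> H'"
    then have "v \<in> comp E (S - {u}) h'" using components_eq_comp[OF H' h'(2)] by simp
    then have "(adj_within E (S - {u}))\<^sup>*\<^sup>* h' v" by (simp add: mem_comp_iff)
    moreover have "v \<notin> H" using HS by blast
    ultimately obtain a b where ab: "a \<in> H" "b \<notin> H" "adj_within E (S - {u}) a b"
      using rtranclp_exits_set[of _ h' v H] h'(1) by blast
    then have "b = v" using component_exit_edge[OF H ab(1)] by (simp add: adj_within_def)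
    with ab(3) have "E v a" "a \<noteq> u" using sym by (simp_all add: adj_within_def sympD)
    then show False using unique_neighbour_in_component[OF H u(1) ab(1) u(2)] by simp
  qed
  with H'S have "H' \<subseteq> S - {v}" by blast
  then have "H' \<subseteq> comp E (S - {v}) h'"
    using connected_on_components[OF H'] h'(2) by (intro connected_subset_comp)
  then show "H' \<subset> H"
    using components_eq_comp[OF H h'(1)] u(1) H'S by blast
qed

lemma heavy_component_shrinks:
  fixes w :: "'a \<Rightarrow> real"
  assumes fin: "finite S" and con: "connected_on E S" and w: "\<forall>x\<in>S. 0 \<le> w x"
    and heavy: "\<And>u. u \<in> S \<Longrightarrow> \<exists>H\<in>components E (S - {u}). sum w S / 2 < sum w H"
    and v: "v \<in> S" and H: "H \<in> components E (S - {v})" and Hv: "sum w S / 2 < sum w H"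
  shows "\<exists>u H'. u \<in> S \<and> H' \<in> components E (S - {u}) \<and> sum w S / 2 < sum w H' \<and> card H' < card H"
proof -
  have HS: "H \<subseteq> S - {v}" using components_subset[OF H] .
  obtain u where u: "u \<in> H" "E v u" using neighbour_in_component[OF con v H] .
  then have "u \<in> S" using HS by blast
  then obtain H' where H': "H' \<in> components E (S - {u})" "sum w S / 2 < sum w H'"
    using heavy by blast
  have H'S: "H' \<subseteq> S - {u}" using components_subset[OF H'(1)] .
  have fin_H: "finite H" and fin_H': "finite H'"
    using fin HS H'S by (meson Diff_subset finite_subset subset_trans)+
  have "H \<inter> H' \<noteq> {}"
  proof
    assume "H \<inter> H' = {}"
    with fin_H fin_H' have "sum w H + sum w H' = sum w (H \<union> H')" by (simp add: sum.union_disjoint)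
    also have "\<dots> \<le> sum w S" using HS H'S w fin by (intro sum_mono2) auto
    finally show False using Hv H'(2) by linarith
  qed
  then have "H' \<subset> H" using component_through_neighbour[OF H u H'(1)] by blast
  then have "card H' < card H" using fin_H by (simp add: psubset_card_mono)
  with \<open>u \<in> S\<close> H' show ?thesis by blast
qed

lemma centroid_exists:
  fixes w :: "'a \<Rightarrow> real"
  assumes "finite S" "S \<noteq> {}" "connected_on E S" "\<forall>x\<in>S. 0 \<le> w x"
  shows "\<exists>v. is_centroid E w S v"
proof (rule ccontr)
  assume "\<nexists>v. is_centroid E w S v"
  then have heavy: "\<And>v. v \<in> S \<Longrightarrow> \<exists>H\<in>components E (S - {v}). sum w S / 2 < sum w H"
    unfolding is_centroid_def by (meson not_le)
  have no_heavy: "\<not> (v \<in> S \<and> H \<in> components E (S - {v}) \<and> sum w S / 2 < sum w H \<and> card H = n)"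
    for n v H
  proof (induction n arbitrary: v H rule: less_induct)
    case (less n)
    show ?case
    proof
      assume "v \<in> S \<and> H \<in> components E (S - {v}) \<and> sum w S / 2 < sum w H \<and> card H = n"
      then obtain u H' where "u \<in> S" "H' \<in> components E (S - {u})" "sum w S / 2 < sum w H'"
          "card H' < n"
        using heavy_component_shrinks[OF assms(1,3,4) heavy] by blast
      with less.IH show False by blast
    qed
  qed
  obtain v where "v \<in> S" using assms(2) by blast
  with heavy no_heavy show False by blast
qed

lemma centroid_tree_exists:
  fixes w :: "'a \<Rightarrow> real"
  shows "finite S \<Longrightarrow> S \<noteq> {} \<Longrightarrow> connected_on E S \<Longrightarrow> \<forall>x\<in>S. 0 \<le> w x \<Longrightarrow>
    \<exists>C. is_centroid_tree E w S C"
proof (induction "card S" arbitrary: S rule: less_induct)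
  case less
  obtain c where c: "is_centroid E w S c" using centroid_exists[OF less.prems] by blast
  then have "c \<in> S" by (simp add: is_centroid_def)
  have "\<exists>C. is_centroid_tree E w K C" if K: "K \<in> components E (S - {c})" for K
  proof (rule less.hyps)
    have "K \<subset> S" using components_subset[OF K] \<open>c \<in> S\<close> by blast
    then show "card K < card S" "finite K"
      using psubset_card_mono[OF less.prems(1)] finite_subset[OF _ less.prems(1)] by auto
    show "K \<noteq> {}" using components_nonempty[OF K] .
    show "connected_on E K" using connected_on_components[OF K] .
    show "\<forall>x\<in>K. 0 \<le> w x" using components_subset[OF K] less.prems(4) by blast
  qed
  then obtain f where f: "\<And>K. K \<in> components E (S - {c}) \<Longrightarrow> is_centroid_tree E w K (f K)"
    by metis
  then have "\<And>K. K \<in> components E (S - {c}) \<Longrightarrow> is_stt E K (f K)"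
    by (simp add: is_centroid_tree_def)
  then obtain ts where ts: "is_stt E S (Node c ts)" "set ts = f ` components E (S - {c})"
    using ex_stt_Node_of_components[OF less.prems(1) \<open>c \<in> S\<close>] by blast
  have "is_centroid_tree E w (verts t) t" if "t \<in> set ts" for t
  proof -
    have "t \<in> f ` components E (S - {c})" using that ts(2) by simp
    then obtain K where K: "t = f K" "K \<in> components E (S - {c})" by (rule imageE)
    then have cent_K: "is_centroid_tree E w K t" using f by simp
    then have "is_stt E K t" by (simp add: is_centroid_tree_def)
    then have "verts t = K" by (rule stt_verts)
    with cent_K show ?thesis by simp
  qed
  with ts(1) c have "is_centroid_tree E w S (Node c ts)"
    by (simp add: is_centroid_tree_Node_iff)
  then show ?case by blast
qed

end

theorem theorem1:
  fixes V :: "'a set" and E :: "'a \<Rightarrow> 'a \<Rightarrow> bool" and w :: "'a \<Rightarrow> real"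
  assumes "is_tree V E"
    and "\<And>x. x \<in> V \<Longrightarrow> w x \<ge> 0"
  shows "cent V E w \<le> 2 * OPT V E w - sum w V"
proof -
  have V: "finite V" "V \<noteq> {}" "connected_on E V" and w: "\<forall>x\<in>V. 0 \<le> w x"
    using assms unfolding is_tree_def by auto
  interpret forest E
    using assms(1) unfolding is_tree_def ugraph_def by unfold_locales (auto intro: sympI)
  have fin_opt: "finite {cost w T | T. is_stt E V T}"
    using finite_stt[OF V(1)] by (simp add: setcompr_eq_image)
  have "{cost w T | T. is_centroid_tree E w V T} \<subseteq> {cost w T | T. is_stt E V T}"
    by (auto simp: is_centroid_tree_def)
  then have fin_cent: "finite {cost w T | T. is_centroid_tree E w V T}"
    using fin_opt by (rule finite_subset)
  obtain C0 where C0: "is_centroid_tree E w V C0" using centroid_tree_exists[OF V w] by blast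
  have "cent V E w \<in> {cost w T | T. is_centroid_tree E w V T}"
    unfolding cent_def using fin_cent C0 by (intro Max_in) auto
  then obtain C where C: "is_centroid_tree E w V C" "cent V E w = cost w C" by blast
  have "OPT V E w \<in> {cost w T | T. is_stt E V T}"
    unfolding OPT_def using fin_opt C0 by (intro Min_in) (auto simp: is_centroid_tree_def)
  then obtain T where T: "is_stt E V T" "OPT V E w = cost w T" by blast
  show ?thesis using centroid_tree_cost_le[OF C(1) w T(1)] C(2) T(2) by simp
qed

end
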